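(* Let $\varepsilon>0$ and $p\in(0,1]$. Let $G$ be an $n$-vertex graph with $e(G)\geq 2n/\varepsilon$ and let $\mu\in\mathcal{M}_{1,p}(G)$. Then \[\mathbb{P}\left[e(\mathbf{G}_\mu)\leq(1-3\varepsilon)p\,e(G)\right]\leq 4n\exp\left(-\frac{\varepsilon^3 p\, e(G)}{6n}\right).\]
   Context: A random graph model on $G$ is a probability measure $\mu$ on subsets of $E(G)$, and $\mathbf{G}_\mu$ is the random spanning subgraph with edge set distributed according to $\mu$. $\mu$ is $1$-independent if for all sets $A,B\subseteq E(G)$ whose edges span disjoint vertex sets, $E(\mathbf{G}_\mu)\cap A$ and $E(\mathbf{G}_\mu)\cap B$ are independent. $\mathcal{M}_{1,p}(G)$ is the set of $1$-independent measures on $G$ in which each edge is present with probability exactly $p$. *)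

theory Defs
  imports "HOL-Probability.Probability"
begin

definition graph :: "'a set \<Rightarrow> 'a set set \<Rightarrow> bool" where
  "graph V E \<longleftrightarrow> finite V \<and> (\<forall>e\<in>E. e \<subseteq> V \<and> card e = 2)"

text \<open>Since E is finite we use a probability mass function whose support lies in Pow E;
  the random edge set is the outcome S.\<close>
definition random_graph_model :: "'a set set \<Rightarrow> 'a set set pmf \<Rightarrow> bool" where
  "random_graph_model E \<mu> \<longleftrightarrow> set_pmf \<mu> \<subseteq> Pow E"

definition one_independent :: "'a set set \<Rightarrow> 'a set set pmf \<Rightarrow> bool" where
  "one_independent E \<mu> \<longleftrightarrow>
     (\<forall>A B. A \<subseteq> E \<longrightarrow> B \<subseteq> E \<longrightarrow> \<Union>A \<inter> \<Union>B = {} \<longrightarrow>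
        (\<forall>X Y. measure_pmf.prob \<mu> {S. S \<inter> A = X \<and> S \<inter> B = Y}
               = measure_pmf.prob \<mu> {S. S \<inter> A = X} * measure_pmf.prob \<mu> {S. S \<inter> B = Y}))"

definition M1p :: "'a set \<Rightarrow> 'a set set \<Rightarrow> real \<Rightarrow> 'a set set pmf set" where
  "M1p V E p = {\<mu>. random_graph_model E \<mu> \<and> one_independent E \<mu> \<and>
                   (\<forall>e\<in>E. measure_pmf.prob \<mu> {S. e \<in> S} = p)}"

end

theory Submission
  imports Defs
begin

(*
  Colour the edges of G greedily with 4n colours so that every colour class is a matching
  (an edge meets at most 2n others). The edges of a matching span pairwise disjoint vertex
  sets, so 1-independence makes their indicators independent, and Chernoff's bound gives
  P[|E(G_\<mu>) \<inter> M| \<le> (1 - \<epsilon>) p |M|] \<le> exp (-\<epsilon>^2 p |M| / 2) for every class M.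
  Classes with fewer than t = \<epsilon> e(G) / (2n) edges contain at most 2 \<epsilon> e(G) edges in total;
  if no larger class is deficient, then e(G_\<mu>) \<ge> (1 - \<epsilon>) (1 - 2 \<epsilon>) p e(G) > (1 - 3 \<epsilon>) p e(G).
  A union bound over the at most 4n large classes finishes the proof, even with 4n in place
  of 6n in the exponent.
*)

lemma map_pmf_pair_eq_pair_pmf:
  assumes "\<And>x y. measure_pmf.prob \<mu> {\<omega>. X \<omega> = x \<and> Y \<omega> = y}
                  = measure_pmf.prob \<mu> {\<omega>. X \<omega> = x} * measure_pmf.prob \<mu> {\<omega>. Y \<omega> = y}"
  shows "map_pmf (\<lambda>\<omega>. (X \<omega>, Y \<omega>)) \<mu> = pair_pmf (map_pmf X \<mu>) (map_pmf Y \<mu>)"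
proof (rule pmf_eqI)
  fix z
  show "pmf (map_pmf (\<lambda>\<omega>. (X \<omega>, Y \<omega>)) \<mu>) z = pmf (pair_pmf (map_pmf X \<mu>) (map_pmf Y \<mu>)) z"
    using assms by (cases z) (simp add: pmf_map pmf_pair vimage_def)
qed

lemma expectation_pair_pmf_mult:
  fixes g :: "'a \<Rightarrow> real" and h :: "'b \<Rightarrow> real"
  assumes "finite (set_pmf P)" and "finite (set_pmf Q)"
  shows "measure_pmf.expectation (pair_pmf P Q) (\<lambda>(x, y). g x * h y)
           = measure_pmf.expectation P g * measure_pmf.expectation Q h"
proof -
  have "measure_pmf.expectation (pair_pmf P Q) (\<lambda>(x, y). g x * h y)
      = (\<Sum>z\<in>set_pmf P \<times> set_pmf Q. (case z of (x, y) \<Rightarrow> g x * h y) * pmf (pair_pmf P Q) z)"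
    using assms by (intro integral_measure_pmf_real) auto
  also have "\<dots> = (\<Sum>x\<in>set_pmf P. g x * pmf P x) * (\<Sum>y\<in>set_pmf Q. h y * pmf Q y)"
    unfolding sum_product sum.cartesian_product by (rule sum.cong) (auto simp: pmf_pair)
  also have "\<dots> = measure_pmf.expectation P g * measure_pmf.expectation Q h"
    using assms by (simp add: integral_measure_pmf_real)
  finally show ?thesis .
qed

lemma expectation_mult_indep_pmf:
  fixes g :: "'b \<Rightarrow> real" and h :: "'c \<Rightarrow> real"
  assumes "finite (X ` set_pmf \<mu>)" and "finite (Y ` set_pmf \<mu>)"
    and "\<And>x y. measure_pmf.prob \<mu> {\<omega>. X \<omega> = x \<and> Y \<omega> = y}
                  = measure_pmf.prob \<mu> {\<omega>. X \<omega> = x} * measure_pmf.prob \<mu> {\<omega>. Y \<omega> = y}"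
  shows "measure_pmf.expectation \<mu> (\<lambda>\<omega>. g (X \<omega>) * h (Y \<omega>))
           = measure_pmf.expectation \<mu> (\<lambda>\<omega>. g (X \<omega>)) * measure_pmf.expectation \<mu> (\<lambda>\<omega>. h (Y \<omega>))"
proof -
  have "measure_pmf.expectation \<mu> (\<lambda>\<omega>. g (X \<omega>) * h (Y \<omega>))
      = measure_pmf.expectation (map_pmf (\<lambda>\<omega>. (X \<omega>, Y \<omega>)) \<mu>) (\<lambda>(x, y). g x * h y)"
    by simp
  also have "\<dots> = measure_pmf.expectation (pair_pmf (map_pmf X \<mu>) (map_pmf Y \<mu>)) (\<lambda>(x, y). g x * h y)"
    by (simp only: map_pmf_pair_eq_pair_pmf[OF assms(3)])
  also have "\<dots> = measure_pmf.expectation (map_pmf X \<mu>) g * measure_pmf.expectation (map_pmf Y \<mu>) h"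
    using assms(1,2) by (intro expectation_pair_pmf_mult) auto
  finally show ?thesis by simp
qed

lemma expectation_mult_one_independent:
  fixes g h :: "'a set set \<Rightarrow> real"
  assumes "one_independent E \<mu>" and "A \<subseteq> E" and "B \<subseteq> E" and "finite A" and "finite B"
    and "\<Union>A \<inter> \<Union>B = {}"
  shows "measure_pmf.expectation \<mu> (\<lambda>S. g (S \<inter> A) * h (S \<inter> B))
           = measure_pmf.expectation \<mu> (\<lambda>S. g (S \<inter> A)) * measure_pmf.expectation \<mu> (\<lambda>S. h (S \<inter> B))"
proof (rule expectation_mult_indep_pmf[where X = "\<lambda>S. S \<inter> A" and Y = "\<lambda>S. S \<inter> B"])
  show "finite ((\<lambda>S. S \<inter> A) ` set_pmf \<mu>)" "finite ((\<lambda>S. S \<inter> B) ` set_pmf \<mu>)"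
    using assms(4,5) by (auto intro: finite_subset[of _ "Pow _"])
qed (use assms in \<open>auto simp: one_independent_def\<close>)

lemma expectation_exp_card_single:
  "measure_pmf.expectation \<mu> (\<lambda>S. exp (- l * real (card (S \<inter> {e}))))
     = 1 + (exp (- l) - 1) * measure_pmf.prob \<mu> {S. e \<in> S}"
proof -
  have "(\<lambda>S. exp (- l * real (card (S \<inter> {e})))) = (\<lambda>S. 1 + (exp (- l) - 1) * indicator {S. e \<in> S} S)"
    by (auto simp: fun_eq_iff indicator_def)
  then show ?thesis
    by (simp add: measure_pmf.emeasure_finite less_top[symmetric])
qed

lemma expectation_exp_card_matching:
  assumes "one_independent E \<mu>" and "finite M" and "M \<subseteq> E" and "disjoint M"
  shows "measure_pmf.expectation \<mu> (\<lambda>S. exp (- l * real (card (S \<inter> M))))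
           = (\<Prod>e\<in>M. 1 + (exp (- l) - 1) * measure_pmf.prob \<mu> {S. e \<in> S})"
  using assms(2-4)
proof (induction M rule: finite_induct)
  case empty
  then show ?case by simp
next
  case (insert e F)
  have "card (S \<inter> insert e F) = card (S \<inter> {e}) + card (S \<inter> F)" for S
    using insert.hyps by (subst card_Un_disjoint[symmetric]) (auto intro: arg_cong[where f = card])
  then have "measure_pmf.expectation \<mu> (\<lambda>S. exp (- l * real (card (S \<inter> insert e F))))
      = measure_pmf.expectation \<mu> (\<lambda>S. exp (- l * real (card (S \<inter> {e}))) * exp (- l * real (card (S \<inter> F))))"
    by (simp add: distrib_left exp_add[symmetric])
  also have "\<dots> = measure_pmf.expectation \<mu> (\<lambda>S. exp (- l * real (card (S \<inter> {e}))))
                 * measure_pmf.expectation \<mu> (\<lambda>S. exp (- l * real (card (S \<inter> F))))"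
    using insert.prems insert.hyps
    by (intro expectation_mult_one_independent[OF assms(1)]) (auto simp: pairwise_insert disjnt_def)
  finally show ?case
    using insert expectation_exp_card_single[of \<mu> l e] by (simp add: pairwise_insert)
qed

lemma exp_minus_le_quadratic:
  fixes x :: real
  assumes "0 \<le> x"
  shows "exp (- x) \<le> 1 - x + x\<^sup>2 / 2"
proof -
  have pos: "0 < 1 + x + x\<^sup>2 / 2"
    using assms by (simp add: add_pos_nonneg)
  have "exp (- x) * (1 + x + x\<^sup>2 / 2) \<le> exp (- x) * exp x"
    using exp_lower_Taylor_quadratic[OF assms] by simp
  also have "\<dots> = 1"
    by (simp add: exp_minus)
  also have "1 \<le> (1 - x + x\<^sup>2 / 2) * (1 + x + x\<^sup>2 / 2)"
    using assms by (simp add: power2_eq_square field_simps)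
  finally show ?thesis
    using pos by (rule mult_right_le_imp_le)
qed

lemma matching_lower_tail:
  assumes "one_independent E \<mu>" and "finite M" and "M \<subseteq> E" and "disjoint M"
    and "\<forall>e\<in>M. measure_pmf.prob \<mu> {S. e \<in> S} = p" and "0 \<le> p" and "p \<le> 1" and "0 < \<epsilon>"
  shows "measure_pmf.prob \<mu> {S. real (card (S \<inter> M)) \<le> (1 - \<epsilon>) * p * real (card M)}
           \<le> exp (- (\<epsilon>\<^sup>2 * p * real (card M) / 2))"
proof -
  let ?m = "real (card M)"
  have integrable: "set_integrable (measure_pmf \<mu>) UNIV (\<lambda>S. exp (- \<epsilon> * real (card (S \<inter> M))))"
    unfolding set_integrable_def
    using \<open>0 < \<epsilon>\<close> by (intro measure_pmf.integrable_const_bound[where B = 1]) auto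
  have mgf: "measure_pmf.expectation \<mu> (\<lambda>S. exp (- \<epsilon> * real (card (S \<inter> M))))
               = (1 + p * (exp (- \<epsilon>) - 1)) ^ card M"
    using expectation_exp_card_matching[OF assms(1-4)] assms(5) by (simp add: mult.commute)
  have "1 + p * (exp (- \<epsilon>) - 1) \<le> exp (p * (exp (- \<epsilon>) - 1))"
    by (rule exp_ge_add_one_self)
  also have "\<dots> \<le> exp (p * (\<epsilon>\<^sup>2 / 2 - \<epsilon>))"
    using exp_minus_le_quadratic[of \<epsilon>] assms(6,8) by (simp add: mult_left_mono)
  finally have factor: "1 + p * (exp (- \<epsilon>) - 1) \<le> exp (p * (\<epsilon>\<^sup>2 / 2 - \<epsilon>))" .
  have "measure_pmf.prob \<mu> {S. real (card (S \<inter> M)) \<le> (1 - \<epsilon>) * p * ?m}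
      \<le> exp (\<epsilon> * ((1 - \<epsilon>) * p * ?m))
          * measure_pmf.expectation \<mu> (\<lambda>S. exp (- \<epsilon> * real (card (S \<inter> M))))"
    using measure_pmf.Chernoff_ineq_le[OF \<open>0 < \<epsilon>\<close> integrable, of "(1 - \<epsilon>) * p * ?m"]
    by (simp add: set_lebesgue_integral_def)
  also have "\<dots> \<le> exp (\<epsilon> * ((1 - \<epsilon>) * p * ?m)) * exp (p * (\<epsilon>\<^sup>2 / 2 - \<epsilon>)) ^ card M"
  proof -
    have "0 \<le> (1 - p) + p * exp (- \<epsilon>)"
      using assms(6,7) by simp
    then show ?thesis
      unfolding mgf using factor by (intro mult_left_mono power_mono) (auto simp: algebra_simps)
  qed
  also have "\<dots> = exp (- (\<epsilon>\<^sup>2 * p * ?m / 2))"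
    by (simp add: exp_of_nat_mult[symmetric] exp_add[symmetric] power2_eq_square algebra_simps)
  finally show ?thesis .
qed

lemma card_edges_at_vertex_le:
  assumes "graph V E"
  shows "card {f\<in>E. u \<in> f} \<le> card V"
proof -
  have "{f\<in>E. u \<in> f} \<subseteq> (\<lambda>w. {u, w}) ` V"
  proof
    fix f assume f: "f \<in> {f\<in>E. u \<in> f}"
    then have "f \<subseteq> V" "card (f - {u}) = 1"
      using assms by (auto simp: graph_def)
    then obtain w where "f - {u} = {w}"
      by (meson card_1_singletonE)
    then have "f = {u, w}" and "w \<in> V"
      using f \<open>f \<subseteq> V\<close> by auto
    then show "f \<in> (\<lambda>w. {u, w}) ` V" by blast
  qed
  then have "card {f\<in>E. u \<in> f} \<le> card ((\<lambda>w. {u, w}) ` V)"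
    using assms by (intro card_mono) (auto simp: graph_def)
  also have "\<dots> \<le> card V"
    by (rule card_image_le) (use assms in \<open>simp add: graph_def\<close>)
  finally show ?thesis .
qed

lemma graph_finite_edges: "graph V E \<Longrightarrow> finite E"
  unfolding graph_def by (meson Pow_iff finite_Pow_iff finite_subset subsetI)

lemma greedy_edge_colouring:
  assumes "graph V E" and "2 * card V < K"
  shows "\<exists>c. (\<forall>e\<in>E. c e < K) \<and> (\<forall>i. disjoint {e\<in>E. c e = i})"
proof -
  have "\<exists>c. (\<forall>e\<in>F. c e < K) \<and> (\<forall>i. disjoint {e\<in>F. c e = i})" if "F \<subseteq> E" for F
    using finite_subset[OF that graph_finite_edges[OF assms(1)]] that
  proof (induction F rule: finite_induct)
    case empty
    then show ?case by simp
  next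
    case (insert e F)
    then obtain c where c_less: "\<forall>f\<in>F. c f < K" and c_disj: "\<forall>i. disjoint {f\<in>F. c f = i}"
      by auto
    obtain u v where e: "e = {u, v}"
      using insert.prems assms(1) by (auto simp: graph_def card_2_iff)
    define Adj where "Adj = {f\<in>F. \<not> disjnt e f}"
    have "Adj \<subseteq> {f\<in>E. u \<in> f} \<union> {f\<in>E. v \<in> f}"
      using insert.prems by (auto simp: Adj_def e disjnt_def)
    then have "card Adj \<le> card ({f\<in>E. u \<in> f} \<union> {f\<in>E. v \<in> f})"
      using graph_finite_edges[OF assms(1)] by (intro card_mono) auto
    also have "\<dots> \<le> card {f\<in>E. u \<in> f} + card {f\<in>E. v \<in> f}"
      by (rule card_Un_le)
    also have "\<dots> < K"
      using card_edges_at_vertex_le[OF assms(1), of u] card_edges_at_vertex_le[OF assms(1), of v] assms(2)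
      by linarith
    finally have "card (c ` Adj) < card {..<K}"
      using card_image_le[of Adj c] insert.hyps(1) by (simp add: Adj_def)
    then have "\<not> {..<K} \<subseteq> c ` Adj"
      using insert.hyps(1) by (auto simp: Adj_def dest: card_mono[rotated])
    then obtain k where k: "k < K" "k \<notin> c ` Adj"
      by auto
    have "disjoint {f\<in>insert e F. (c(e := k)) f = i}" for i
    proof (cases "i = k")
      case True
      then have "{f\<in>insert e F. (c(e := k)) f = i} = insert e {f\<in>F. c f = k}"
        using insert.hyps(2) by auto
      then show ?thesis
        using c_disj k(2) by (auto simp: pairwise_insert Adj_def disjnt_sym)
    next
      case False
      then have "{f\<in>insert e F. (c(e := k)) f = i} = {f\<in>F. c f = i}"
        using insert.hyps(2) by auto
      then show ?thesis
        using c_disj by simp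
    qed
    then show ?case
      using c_less k(1) by (intro exI[of _ "c(e := k)"]) auto
  qed
  then show ?thesis by blast
qed

lemma card_eq_sum_card_colour_classes:
  fixes K :: nat
  assumes "finite X" and "\<forall>e\<in>X. c e < K"
  shows "real (card X) = (\<Sum>i<K. real (card {e\<in>X. c e = i}))"
  using sum.group[of X "{..<K}" c "\<lambda>_. 1 :: real"] assms by (simp add: image_subset_iff)

lemma card_lower_bound_by_colour_classes:
  fixes K :: nat and a t :: real
  assumes "finite E" and "S \<subseteq> E" and "\<forall>e\<in>E. c e < K" and "0 \<le> a" and "0 \<le> t"
    and dense: "\<And>i. i < K \<Longrightarrow> t \<le> card {e\<in>E. c e = i}
                  \<Longrightarrow> a * card {e\<in>E. c e = i} \<le> card {e\<in>S. c e = i}"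
  shows "a * (card E - real K * t) \<le> card S"
proof -
  define L where "L = {i\<in>{..<K}. t \<le> card {e\<in>E. c e = i}}"
  have L_sub: "L \<subseteq> {..<K}"
    by (auto simp: L_def)
  have "(\<Sum>i\<in>{..<K} - L. real (card {e\<in>E. c e = i})) \<le> (\<Sum>i\<in>{..<K} - L. t)"
    by (rule sum_mono) (auto simp: L_def)
  also have "\<dots> \<le> real K * t"
    using \<open>0 \<le> t\<close> card_mono[of "{..<K}" "{..<K} - L"] by (simp add: mult_right_mono)
  finally have small: "(\<Sum>i\<in>{..<K} - L. real (card {e\<in>E. c e = i})) \<le> real K * t" .
  have "real (card E) = (\<Sum>i\<in>L. real (card {e\<in>E. c e = i})) + (\<Sum>i\<in>{..<K} - L. real (card {e\<in>E. c e = i}))"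
    using card_eq_sum_card_colour_classes[OF assms(1,3)] sum.subset_diff[OF L_sub]
    by (simp add: add.commute)
  then have "a * (card E - real K * t) \<le> (\<Sum>i\<in>L. a * card {e\<in>E. c e = i})"
    using small \<open>0 \<le> a\<close> by (simp add: sum_distrib_left[symmetric] mult_left_mono)
  also have "\<dots> \<le> (\<Sum>i\<in>L. real (card {e\<in>S. c e = i}))"
    using dense by (intro sum_mono) (auto simp: L_def)
  also have "\<dots> \<le> (\<Sum>i<K. real (card {e\<in>S. c e = i}))"
    by (rule sum_mono2) (auto simp: L_def)
  also have "\<dots> = card S"
    using assms(1-3) finite_subset by (intro card_eq_sum_card_colour_classes[symmetric]) auto
  finally show ?thesis .
qed

lemma prob_few_edges_le_colour_classes:
  fixes K :: nat and p \<epsilon> t :: real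
  assumes "random_graph_model E \<mu>" and "one_independent E \<mu>"
    and "\<forall>e\<in>E. measure_pmf.prob \<mu> {S. e \<in> S} = p" and "0 \<le> p" and "p \<le> 1"
    and "0 < \<epsilon>" and "\<epsilon> \<le> 1" and "finite E"
    and "\<forall>e\<in>E. c e < K" and "\<forall>i. disjoint {e\<in>E. c e = i}" and "0 \<le> t"
  shows "measure_pmf.prob \<mu> {S. real (card S) < (1 - \<epsilon>) * p * (card E - real K * t)}
           \<le> K * exp (- (\<epsilon>\<^sup>2 * p * t / 2))"
proof -
  define M where "M i = {e\<in>E. c e = i}" for i
  define L where "L = {i\<in>{..<K}. t \<le> card (M i)}"
  define deficient where "deficient i = {S. real (card (S \<inter> M i)) \<le> (1 - \<epsilon>) * p * card (M i)}" for i
  have "S \<in> (\<Union>i\<in>L. deficient i)"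
    if S: "S \<in> set_pmf \<mu>" "real (card S) < (1 - \<epsilon>) * p * (card E - real K * t)" for S
  proof (rule ccontr)
    assume "S \<notin> (\<Union>i\<in>L. deficient i)"
    moreover have "S \<subseteq> E"
      using S(1) assms(1) by (auto simp: random_graph_model_def)
    then have "S \<inter> M i = {e\<in>S. c e = i}" for i
      by (auto simp: M_def)
    ultimately have "(1 - \<epsilon>) * p * (card E - real K * t) \<le> card S"
      using \<open>S \<subseteq> E\<close> assms(4,7-9,11)
      by (intro card_lower_bound_by_colour_classes) (auto simp: L_def M_def deficient_def)
    then show False
      using S(2) by simp
  qed
  then have "measure_pmf.prob \<mu> {S. real (card S) < (1 - \<epsilon>) * p * (card E - real K * t)}
               \<le> measure_pmf.prob \<mu> (\<Union>i\<in>L. deficient i)"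
    by (subst measure_Int_set_pmf[symmetric]) (intro measure_pmf.finite_measure_mono, auto)
  also have "\<dots> \<le> (\<Sum>i\<in>L. measure_pmf.prob \<mu> (deficient i))"
    by (intro measure_pmf.finite_measure_subadditive_finite) (auto simp: L_def)
  also have "\<dots> \<le> (\<Sum>i\<in>L. exp (- (\<epsilon>\<^sup>2 * p * t / 2)))"
  proof (rule sum_mono)
    fix i assume "i \<in> L"
    have "measure_pmf.prob \<mu> (deficient i) \<le> exp (- (\<epsilon>\<^sup>2 * p * card (M i) / 2))"
      unfolding deficient_def using assms(2-6,8,10)
      by (intro matching_lower_tail) (auto simp: M_def)
    also have "\<dots> \<le> exp (- (\<epsilon>\<^sup>2 * p * t / 2))"
      using \<open>i \<in> L\<close> \<open>0 \<le> p\<close> by (simp add: L_def mult_left_mono)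
    finally show "measure_pmf.prob \<mu> (deficient i) \<le> exp (- (\<epsilon>\<^sup>2 * p * t / 2))" .
  qed
  also have "\<dots> \<le> K * exp (- (\<epsilon>\<^sup>2 * p * t / 2))"
  proof -
    have "card L \<le> K"
      using card_mono[of "{..<K}" L] by (auto simp: L_def)
    then show ?thesis
      by (simp add: mult_right_mono)
  qed
  finally show ?thesis .
qed

lemma prob_few_edges_le_colouring:
  fixes K :: nat and p \<epsilon> :: real
  assumes "random_graph_model E \<mu>" and "one_independent E \<mu>"
    and "\<forall>e\<in>E. measure_pmf.prob \<mu> {S. e \<in> S} = p" and "0 < p" and "p \<le> 1" and "0 < \<epsilon>"
    and "finite E" and "E \<noteq> {}" and "\<forall>e\<in>E. c e < K" and "\<forall>i. disjoint {e\<in>E. c e = i}"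
  shows "measure_pmf.prob \<mu> {S. real (card S) \<le> (1 - 3 * \<epsilon>) * p * card E}
           \<le> K * exp (- (\<epsilon> ^ 3 * p * card E / K))"
proof (cases "\<epsilon> \<le> 1 / 3")
  case False
  then have "(1 - 3 * \<epsilon>) * p * card E < 0"
    using assms(4,7,8) by (simp add: mult_neg_pos card_gt_0_iff)
  then have no_outcome: "{S. real (card S) \<le> (1 - 3 * \<epsilon>) * p * card E} = {}"
    by (auto simp: not_le intro: less_le_trans)
  show ?thesis
    unfolding no_outcome by simp
next
  case True
  have K_pos: "0 < K"
    using assms(8,9) by auto
  define t where "t = 2 * \<epsilon> * card E / K"
  have "(1 - 3 * \<epsilon>) * p * card E < (1 - \<epsilon>) * p * (card E - real K * t)"
    using assms(4,6-8) K_pos by (simp add: t_def field_simps card_gt_0_iff)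
  then have "measure_pmf.prob \<mu> {S. real (card S) \<le> (1 - 3 * \<epsilon>) * p * card E}
      \<le> measure_pmf.prob \<mu> {S. real (card S) < (1 - \<epsilon>) * p * (card E - real K * t)}"
    by (intro measure_pmf.finite_measure_mono) auto
  also have "\<dots> \<le> K * exp (- (\<epsilon>\<^sup>2 * p * t / 2))"
    using assms True by (intro prob_few_edges_le_colour_classes) (auto simp: t_def)
  also have "\<dots> = K * exp (- (\<epsilon> ^ 3 * p * card E / K))"
    by (simp add: t_def power2_eq_square power3_eq_cube)
  finally show ?thesis .
qed

theorem lemma22:
  fixes V :: "'a set" and E :: "'a set set" and \<epsilon> p :: real and n :: nat
    and \<mu> :: "'a set set pmf"
  assumes "\<epsilon> > 0" and "0 < p" and "p \<le> 1"
    and "graph V E" and "V \<noteq> {}" and "card V = n"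
    and "real (card E) \<ge> 2 * real n / \<epsilon>"
    and "\<mu> \<in> M1p V E p"
  shows "measure_pmf.prob \<mu> {S. real (card S) \<le> (1 - 3 * \<epsilon>) * p * real (card E)}
           \<le> 4 * real n * exp (- (\<epsilon> ^ 3 * p * real (card E)) / (6 * real n))"
proof -
  have n_pos: "0 < n"
    using assms(4-6) by (auto simp: graph_def card_gt_0_iff)
  \<comment> \<open>the lower bound on e(G) is needed only to make e(G) positive\<close>
  have "0 < 2 * real n / \<epsilon>"
    using assms(1) n_pos by simp
  with assms(7) have E_pos: "0 < real (card E)"
    by linarith
  obtain c where "\<forall>e\<in>E. c e < 4 * n" and "\<forall>i. disjoint {e\<in>E. c e = i}"
    using greedy_edge_colouring[OF assms(4), of "4 * n"] assms(6) n_pos by auto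
  then have "measure_pmf.prob \<mu> {S. real (card S) \<le> (1 - 3 * \<epsilon>) * p * real (card E)}
               \<le> real (4 * n) * exp (- (\<epsilon> ^ 3 * p * card E / real (4 * n)))"
    using assms(1-3,8) graph_finite_edges[OF assms(4)] E_pos
    by (intro prob_few_edges_le_colouring) (auto simp: M1p_def)
  also have "\<dots> \<le> 4 * real n * exp (- (\<epsilon> ^ 3 * p * real (card E)) / (6 * real n))"
    using assms(1,2) E_pos n_pos by (simp add: frac_le)
  finally show ?thesis .
qed

end
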